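(* A function $f:\Omega_D\to\mathbb{O}$ is both slice Fueter-regular and slice regular if and only if it is constant.
   Context: Octonions $\mathbb{O}=\mathbb{H}+\ell\mathbb{H}$ (Cayley–Dickson product $(a+\ell b)(c+\ell d)=(ac-d\bar b)+\ell(\bar a d+cb)$), identified with $\mathbb{R}^8$; $\mathbb{S}=\{I\in\mathbb{O}:I^2=-1\}$. $D\subset\mathbb{R}^2$ is a non-empty open set invariant under $(x_0,x_1)\mapsto(x_0,-x_1)$, $\Omega_D=\{x_0+x_1I:(x_0,x_1)\in D,I\in\mathbb{S}\}$, assumed connected. A stem function is $F=(F_1,F_2):D\to\mathbb{O}^2$ with $F_1$ even and $F_2$ odd in $x_1$; it induces the slice function $f(x_0+x_1I)=F_1(x_0,x_1)+IF_2(x_0,x_1)$. A slice function is slice regular if its stem function $F$ is $C^1$ and $\frac{\partial F_1}{\partial x_0}=\frac{\partial F_2}{\partial x_1}$, $\frac{\partial F_1}{\partial x_1}=-\frac{\partial F_2}{\partial x_0}$ on $D$. Let $E=\{(x_0,x_1,x_2,x_3):(x_0,(x_1^2+x_2^2+x_3^2)^{1/2})\in D\}$, $\mathcal N=\{(I,J)\in\mathbb{S}^2:I\perp J\}$, and let $O(3)$ be the real orthogonal $4\times4$ matrices fixing the first basis vector, acting on $\mathbb{R}^4$, $\mathbb{O}^4$ by matrix–column multiplication. $f:\Omega_D\to\mathbb{O}$ is slice Fueter-regular if there is $\mathcal F=(\mathcal F_0,\dots,\mathcal F_3):E\to\mathbb{O}^4$ of class $C^1$ with $\mathcal F(Av)=A\mathcal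 F(v)$ ($A\in O(3)$), $f(x_0+x_1I+x_2J+x_3(IJ))=\mathcal F_0(v)+I\mathcal F_1(v)+J\mathcal F_2(v)+(IJ)\mathcal F_3(v)$ for all $v=(x_0,\dots,x_3)\in E$, $(I,J)\in\mathcal N$, and $\partial_0\mathcal F_0-\partial_1\mathcal F_1-\partial_2\mathcal F_2-\partial_3\mathcal F_3=0$, $\partial_1\mathcal F_0+\partial_0\mathcal F_1-\partial_3\mathcal F_2+\partial_2\mathcal F_3=0$, $\partial_2\mathcal F_0+\partial_3\mathcal F_1+\partial_0\mathcal F_2-\partial_1\mathcal F_3=0$, $\partial_3\mathcal F_0-\partial_2\mathcal F_1+\partial_1\mathcal F_2+\partial_0\mathcal F_3=0$ on $E$. *)

theory Defs
  imports "HOL-Analysis.Analysis"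
begin

text \<open>A quaternion q = q1 + q2 i + q3 j + q4 k is a vector in real^4 with components
  q$1,...,q$4 (real part first).\<close>

type_synonym quat = "real^4"

definition qmul :: "quat \<Rightarrow> quat \<Rightarrow> quat" where
  "qmul p q = vector
     [p$1*q$1 - p$2*q$2 - p$3*q$3 - p$4*q$4,
      p$1*q$2 + p$2*q$1 + p$3*q$4 - p$4*q$3,
      p$1*q$3 - p$2*q$4 + p$3*q$1 + p$4*q$2,
      p$1*q$4 + p$2*q$3 - p$3*q$2 + p$4*q$1]"

definition qcnj :: "quat \<Rightarrow> quat" where
  "qcnj p = vector [p$1, - p$2, - p$3, - p$4]"

text \<open>An octonion a + l b (a, b quaternions) is the pair (a, b); this identifies O with R^8
  (the product of two copies of real^4, a Euclidean space).\<close>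

type_synonym octo = "quat \<times> quat"

definition omul :: "octo \<Rightarrow> octo \<Rightarrow> octo" (infixl "\<odot>" 70) where
  "omul x y = (case x of (a, b) \<Rightarrow> case y of (c, d) \<Rightarrow>
      (qmul a c - qmul d (qcnj b), qmul (qcnj a) d + qmul c b))"

definition oone :: octo where
  "oone = (vector [1, 0, 0, 0], 0)"

definition imag_units :: "octo set" where
  "imag_units = {I. I \<odot> I = - oone}"

definition OmegaD :: "(real \<times> real) set \<Rightarrow> octo set" where
  "OmegaD D = {x0 *\<^sub>R oone + x1 *\<^sub>R I | x0 x1 I. (x0, x1) \<in> D \<and> I \<in> imag_units}"

text \<open>C^1 on an open set: differentiable at every point, with the derivative depending
  continuously on the point (tested on each direction vector; in finite dimension this is
  continuity of the derivative).\<close>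
definition C1_on :: "'a::euclidean_space set \<Rightarrow> ('a \<Rightarrow> 'b::real_normed_vector) \<Rightarrow> bool" where
  "C1_on S F \<longleftrightarrow> (\<forall>p\<in>S. F differentiable (at p)) \<and>
      (\<forall>v. continuous_on S (\<lambda>p. frechet_derivative F (at p) v))"

definition pd0 :: "(real \<times> real \<Rightarrow> 'b::real_normed_vector) \<Rightarrow> real \<times> real \<Rightarrow> 'b" where
  "pd0 F p = frechet_derivative F (at p) (1, 0)"
definition pd1 :: "(real \<times> real \<Rightarrow> 'b::real_normed_vector) \<Rightarrow> real \<times> real \<Rightarrow> 'b" where
  "pd1 F p = frechet_derivative F (at p) (0, 1)"

text \<open>Partial derivatives for functions on R^4 = real^4; coordinate x_k is v$(k+1),
  so the partial derivative with respect to x_k is in direction axis (k+1) 1.\<close>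
definition pd4 :: "(real^4 \<Rightarrow> 'b::real_normed_vector) \<Rightarrow> 4 \<Rightarrow> real^4 \<Rightarrow> 'b" where
  "pd4 F k v = frechet_derivative F (at v) (axis k 1)"

definition stem_function :: "(real \<times> real) set \<Rightarrow> (real \<times> real \<Rightarrow> octo) \<Rightarrow> (real \<times> real \<Rightarrow> octo) \<Rightarrow> bool" where
  "stem_function D F1 F2 \<longleftrightarrow>
     (\<forall>x0 x1. (x0, x1) \<in> D \<longrightarrow> F1 (x0, - x1) = F1 (x0, x1) \<and> F2 (x0, - x1) = - F2 (x0, x1))"

definition induces :: "(real \<times> real) set \<Rightarrow> (real \<times> real \<Rightarrow> octo) \<Rightarrow> (real \<times> real \<Rightarrow> octo) \<Rightarrow> (octo \<Rightarrow> octo) \<Rightarrow> bool" where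
  "induces D F1 F2 f \<longleftrightarrow>
     (\<forall>x0 x1 I. (x0, x1) \<in> D \<longrightarrow> I \<in> imag_units \<longrightarrow>
        f (x0 *\<^sub>R oone + x1 *\<^sub>R I) = F1 (x0, x1) + I \<odot> F2 (x0, x1))"

definition slice_regular :: "(real \<times> real) set \<Rightarrow> (octo \<Rightarrow> octo) \<Rightarrow> bool" where
  "slice_regular D f \<longleftrightarrow>
     (\<exists>F1 F2. stem_function D F1 F2 \<and> induces D F1 F2 f \<and>
        C1_on D (\<lambda>p. (F1 p, F2 p)) \<and>
        (\<forall>p\<in>D. pd0 F1 p = pd1 F2 p \<and> pd1 F1 p = - pd0 F2 p))"

definition Eset :: "(real \<times> real) set \<Rightarrow> (real^4) set" where
  "Eset D = {v. (v$1, sqrt ((v$2)\<^sup>2 + (v$3)\<^sup>2 + (v$4)\<^sup>2)) \<in> D}"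

definition Nset :: "(octo \<times> octo) set" where
  "Nset = {(I, J). I \<in> imag_units \<and> J \<in> imag_units \<and> inner I J = 0}"

definition O3 :: "(real^4^4) set" where
  "O3 = {A. orthogonal_matrix A \<and> A *v axis 1 1 = axis 1 1}"

definition mat_act :: "real^4^4 \<Rightarrow> octo^4 \<Rightarrow> octo^4" where
  "mat_act A w = (\<chi> i. \<Sum>j\<in>UNIV. (A $ i $ j) *\<^sub>R (w $ j))"

definition slice_fueter_regular :: "(real \<times> real) set \<Rightarrow> (octo \<Rightarrow> octo) \<Rightarrow> bool" where
  "slice_fueter_regular D f \<longleftrightarrow>
     (\<exists>\<F> :: real^4 \<Rightarrow> octo^4.
        C1_on (Eset D) \<F> \<and>
        (\<forall>A\<in>O3. \<forall>v\<in>Eset D. \<F> (A *v v) = mat_act A (\<F> v)) \<and>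
        (\<forall>v\<in>Eset D. \<forall>(I, J)\<in>Nset.
            f (v$1 *\<^sub>R oone + v$2 *\<^sub>R I + v$3 *\<^sub>R J + v$4 *\<^sub>R (I \<odot> J))
            = \<F> v $ 1 + I \<odot> (\<F> v $ 2) + J \<odot> (\<F> v $ 3) + (I \<odot> J) \<odot> (\<F> v $ 4)) \<and>
        (let F = (\<lambda>k v. \<F> v $ k) in
         \<forall>v\<in>Eset D.
           pd4 (F 1) 1 v - pd4 (F 2) 2 v - pd4 (F 3) 3 v - pd4 (F 4) 4 v = 0 \<and>
           pd4 (F 1) 2 v + pd4 (F 2) 1 v - pd4 (F 3) 4 v + pd4 (F 4) 3 v = 0 \<and>
           pd4 (F 1) 3 v + pd4 (F 2) 4 v + pd4 (F 3) 1 v - pd4 (F 4) 2 v = 0 \<and>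
           pd4 (F 1) 4 v - pd4 (F 2) 3 v + pd4 (F 3) 2 v + pd4 (F 4) 1 v = 0))"

end

theory Submission
  imports Defs
begin

(* Restricted to the plane x2 = x3 = 0, the Fueter stem function FF reduces to the slice stem
   function (F1, F2): FF_0 = F1 and FF_1 = F2 at (x0, x1, 0, 0). Equivariance of FF under the
   rotations of the (x1, x2)- and (x1, x3)-planes gives x1 d2 FF_2 = x1 d3 FF_3 = F2 there, so the
   first Fueter equation, whose first two terms cancel by the Cauchy-Riemann equation
   d0 F1 = d1 F2, becomes 2 F2 = 0. Both Cauchy-Riemann equations then make F1 locally constant,
   and f(x) = F1(Re x, |Im x|) is constant on the connected set Omega_D. *)

lemma vector_4_nth [simp]:
  "(vector [x, y, z, w] :: 'a::zero^4) $ 1 = x"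
  "(vector [x, y, z, w] :: 'a::zero^4) $ 2 = y"
  "(vector [x, y, z, w] :: 'a::zero^4) $ 3 = z"
  "(vector [x, y, z, w] :: 'a::zero^4) $ 4 = w"
  by (simp_all add: vector_def)

lemma add_diff_eqs_imp_eq:
  fixes a b c d :: "'a::real_vector"
  assumes "a + b = c + d" and "a - b = c - d"
  shows "a = c" and "b = d"
proof -
  have "(2::real) *\<^sub>R a = (2::real) *\<^sub>R c"
    using arg_cong2[OF assms, of "(+)"] by (simp add: scaleR_2 algebra_simps)
  then show "a = c" by simp
  with assms(1) show "b = d" by simp
qed

lemma qmul_nth [simp]:
  "qmul p q $ 1 = p$1 * q$1 - p$2 * q$2 - p$3 * q$3 - p$4 * q$4"
  "qmul p q $ 2 = p$1 * q$2 + p$2 * q$1 + p$3 * q$4 - p$4 * q$3"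
  "qmul p q $ 3 = p$1 * q$3 - p$2 * q$4 + p$3 * q$1 + p$4 * q$2"
  "qmul p q $ 4 = p$1 * q$4 + p$2 * q$3 - p$3 * q$2 + p$4 * q$1"
  by (simp_all add: qmul_def)

lemma qcnj_nth [simp]:
  "qcnj p $ 1 = p$1" "qcnj p $ 2 = - p$2" "qcnj p $ 3 = - p$3" "qcnj p $ 4 = - p$4"
  by (simp_all add: qcnj_def)

lemma oone_nth [simp]:
  "fst oone $ 1 = 1" "fst oone $ 2 = 0" "fst oone $ 3 = 0" "fst oone $ 4 = 0" "snd oone = 0"
  by (simp_all add: oone_def)

lemma quat_eq_iff: "(p::quat) = q \<longleftrightarrow> p$1 = q$1 \<and> p$2 = q$2 \<and> p$3 = q$3 \<and> p$4 = q$4"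
  by (simp add: vec_eq_iff forall_4)

lemma inner_quat: "inner (p::quat) q = p$1 * q$1 + p$2 * q$2 + p$3 * q$3 + p$4 * q$4"
  by (simp add: inner_vec_def sum_4)

lemma inner_octo: "inner (x::octo) y = inner (fst x) (fst y) + inner (snd x) (snd y)"
  by (cases x; cases y) (simp add: inner_Pair)

lemma fst_omul: "fst (x \<odot> y) = qmul (fst x) (fst y) - qmul (snd y) (qcnj (snd x))"
  by (simp add: omul_def split: prod.splits)

lemma snd_omul: "snd (x \<odot> y) = qmul (qcnj (fst x)) (snd y) + qmul (fst y) (snd x)"
  by (simp add: omul_def split: prod.splits)

lemmas octo_coordinates = prod_eq_iff quat_eq_iff fst_omul snd_omul inner_octo inner_quat

lemma omul_minus_left: "(- x) \<odot> y = - (x \<odot> y)"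
  and omul_minus_right: "x \<odot> (- y) = - (x \<odot> y)"
  and omul_zero_right [simp]: "x \<odot> 0 = 0"
  by (simp_all add: octo_coordinates)

lemma imag_units_iff: "I \<in> imag_units \<longleftrightarrow> fst I $ 1 = 0 \<and> inner I I = 1"
proof -
  obtain a b where I: "I = (a, b)" by (cases I)
  have "I \<in> imag_units \<longleftrightarrow>
      a$1 * a$1 - (a$2 * a$2 + a$3 * a$3 + a$4 * a$4 + b$1 * b$1 + b$2 * b$2 + b$3 * b$3 + b$4 * b$4) = -1 \<and>
      a$1 * a$2 = 0 \<and> a$1 * a$3 = 0 \<and> a$1 * a$4 = 0 \<and>
      a$1 * b$1 = 0 \<and> a$1 * b$2 = 0 \<and> a$1 * b$3 = 0 \<and> a$1 * b$4 = 0"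
    unfolding imag_units_def I by (simp add: octo_coordinates algebra_simps)
  also have "\<dots> \<longleftrightarrow> a$1 = 0 \<and>
      a$2 * a$2 + a$3 * a$3 + a$4 * a$4 + b$1 * b$1 + b$2 * b$2 + b$3 * b$3 + b$4 * b$4 = 1"
  proof (cases "a$1 = 0")
    case False
    then show ?thesis by (smt (verit) mult_eq_0_iff zero_le_square)
  qed (simp; linarith)
  finally show ?thesis by (auto simp: I octo_coordinates algebra_simps)
qed

lemma minus_imag_units: "I \<in> imag_units \<Longrightarrow> - I \<in> imag_units"
  by (simp add: imag_units_iff)

lemma re_omul_imaginary:
  "fst I $ 1 = 0 \<Longrightarrow> fst J $ 1 = 0 \<Longrightarrow> fst (I \<odot> J) $ 1 = - inner I J"
  by (simp add: octo_coordinates algebra_simps)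

lemma inner_left_omul_imaginary:
  "fst I $ 1 = 0 \<Longrightarrow> fst J $ 1 = 0 \<Longrightarrow> inner I (I \<odot> J) = 0"
  by (simp add: octo_coordinates algebra_simps)

lemma inner_right_omul_imaginary:
  "fst I $ 1 = 0 \<Longrightarrow> fst J $ 1 = 0 \<Longrightarrow> inner J (I \<odot> J) = 0"
  by (simp add: octo_coordinates algebra_simps)

lemma inner_omul_omul: "inner (I \<odot> J) (I \<odot> J) = inner I I * inner J J"
  by (simp add: octo_coordinates algebra_simps)

lemma Nset_omul:
  assumes "(I, J) \<in> Nset"
  shows "I \<odot> J \<in> imag_units" and "inner I (I \<odot> J) = 0" and "inner J (I \<odot> J) = 0"
  using assms re_omul_imaginary inner_left_omul_imaginary inner_right_omul_imaginary inner_omul_omul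
  by (auto simp: Nset_def imag_units_iff)

lemma Nset_minus_right: "(I, J) \<in> Nset \<Longrightarrow> (I, - J) \<in> Nset"
  by (simp add: Nset_def minus_imag_units)

definition unit_i :: octo where "unit_i = (vector [0, 1, 0, 0], 0)"
definition unit_j :: octo where "unit_j = (vector [0, 0, 1, 0], 0)"

lemma unit_i_unit_j_Nset: "(unit_i, unit_j) \<in> Nset" "(- unit_i, unit_j) \<in> Nset"
  by (simp_all add: Nset_def imag_units_iff unit_i_def unit_j_def octo_coordinates)

lemma omul_unit_i_cancel: "unit_i \<odot> x = unit_i \<odot> y \<Longrightarrow> x = y"
proof -
  have "unit_i \<odot> (unit_i \<odot> w) = - w" for w
    by (simp add: unit_i_def octo_coordinates)
  then show "unit_i \<odot> x = unit_i \<odot> y \<Longrightarrow> x = y" by (metis minus_equation_iff)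
qed

lemma Eset_point_in_OmegaD:
  assumes v: "v \<in> Eset D" and N: "(I, J) \<in> Nset"
  shows "v$1 *\<^sub>R oone + v$2 *\<^sub>R I + v$3 *\<^sub>R J + v$4 *\<^sub>R (I \<odot> J) \<in> OmegaD D"
proof -
  have I: "fst I $ 1 = 0" "inner I I = 1" and J: "fst J $ 1 = 0" "inner J J = 1"
    and K: "fst (I \<odot> J) $ 1 = 0" "inner (I \<odot> J) (I \<odot> J) = 1"
    using N Nset_omul(1)[OF N] by (auto simp: Nset_def imag_units_iff)
  define w where "w = v$2 *\<^sub>R I + v$3 *\<^sub>R J + v$4 *\<^sub>R (I \<odot> J)"
  have w_real: "fst w $ 1 = 0" using I J K by (simp add: w_def)
  have "inner w w = (v$2)\<^sup>2 + (v$3)\<^sup>2 + (v$4)\<^sup>2"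
    using I J K Nset_omul(2,3)[OF N] N
    by (simp add: w_def Nset_def inner_add_left inner_add_right inner_commute power2_eq_square algebra_simps)
  then have in_D: "(v$1, norm w) \<in> D" using v by (simp add: Eset_def norm_eq_sqrt_inner)
  have point: "v$1 *\<^sub>R oone + v$2 *\<^sub>R I + v$3 *\<^sub>R J + v$4 *\<^sub>R (I \<odot> J) = v$1 *\<^sub>R oone + w"
    by (simp add: w_def algebra_simps)
  obtain U where U: "U \<in> imag_units" "w = norm w *\<^sub>R U"
  proof (cases "w = 0")
    case True
    then show ?thesis using that[of I] N by (simp add: Nset_def)
  next
    case False
    define U where "U = (1 / norm w) *\<^sub>R w"
    have "inner U U = 1"
      using False by (simp add: U_def power2_norm_eq_inner[symmetric] power2_eq_square)
    then have "U \<in> imag_units" using w_real by (simp add: imag_units_iff U_def)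
    moreover have "w = norm w *\<^sub>R U" using False by (simp add: U_def)
    ultimately show ?thesis using that by blast
  qed
  have "v$1 *\<^sub>R oone + norm w *\<^sub>R U \<in> OmegaD D"
    using in_D U(1) unfolding OmegaD_def by blast
  then show ?thesis unfolding point using U(2)[symmetric] by simp
qed

definition plane_emb :: "real \<times> real \<Rightarrow> real^4" where
  "plane_emb q = fst q *\<^sub>R axis 1 1 + snd q *\<^sub>R axis 2 1"

lemma plane_emb_nth [simp]:
  "plane_emb q $ 1 = fst q" "plane_emb q $ 2 = snd q" "plane_emb q $ 3 = 0" "plane_emb q $ 4 = 0"
  by (simp_all add: plane_emb_def axis_def)

lemma plane_emb_has_derivative: "(plane_emb has_derivative plane_emb) (at p)"
  unfolding plane_emb_def by (auto intro!: derivative_eq_intros)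

lemma plane_emb_in_Eset:
  assumes sym: "\<And>x0 x1. (x0, x1) \<in> D \<Longrightarrow> (x0, - x1) \<in> D" and "p \<in> D"
  shows "plane_emb p \<in> Eset D"
proof -
  have "(fst p, \<bar>snd p\<bar>) \<in> D"
    using assms by (cases p) (auto simp: abs_if)
  then show ?thesis by (simp add: Eset_def)
qed

definition plane_rot :: "4 \<Rightarrow> real \<Rightarrow> real^4^4" where
  "plane_rot k t = (\<chi> i j. if i = j then (if i = 2 \<or> i = k then cos t else 1)
      else if i = 2 \<and> j = k then - sin t else if i = k \<and> j = 2 then sin t else 0)"

lemma plane_rot_O3:
  assumes "k \<in> {3, 4}"
  shows "plane_rot k t \<in> O3"
  using assms unfolding O3_def orthogonal_matrix_def
  by (auto simp: plane_rot_def vec_eq_iff forall_4 matrix_matrix_mult_def transpose_def mat_def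
      sum_4 matrix_vector_mult_def axis_def algebra_simps simp flip: power2_eq_square)

lemma plane_rot_plane_emb:
  assumes "k \<in> {3, 4}"
  shows "plane_rot k t *v plane_emb (x0, r) =
    x0 *\<^sub>R axis 1 1 + (r * cos t) *\<^sub>R axis 2 1 + (r * sin t) *\<^sub>R axis k 1"
  using assms
  by (auto simp: plane_rot_def plane_emb_def vec_eq_iff forall_4 matrix_vector_mult_def sum_4 axis_def)

lemma mat_act_plane_rot_nth:
  assumes "k \<in> {3, 4}"
  shows "mat_act (plane_rot k t) w $ k = sin t *\<^sub>R w $ 2 + cos t *\<^sub>R w $ k"
  using assms by (auto simp: mat_act_def plane_rot_def sum_4)

lemma O3_first_column:
  assumes "A \<in> O3"
  shows "A$1$1 = 1" "A$2$1 = 0" "A$3$1 = 0" "A$4$1 = 0"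
proof -
  have "(A *v axis 1 1) $ i = axis 1 (1::real) $ i" for i
    using assms by (simp add: O3_def)
  then show "A$1$1 = 1" "A$2$1 = 0" "A$3$1 = 0" "A$4$1 = 0"
    by (simp_all add: matrix_vector_mult_def sum_4 axis_def forall_4)
qed

lemma differentiable_vec_nth:
  "F differentiable at v \<Longrightarrow> (\<lambda>v. F v $ k) differentiable at v"
  using bounded_linear.has_derivative[OF bounded_linear_vec_nth] unfolding differentiable_def
  by blast

lemma frechet_derivative_sin_cos_curve:
  fixes G :: "'a::real_normed_vector \<Rightarrow> 'b::real_normed_vector"
  assumes "G differentiable at (\<gamma> 0)" and "(\<gamma> has_derivative (\<lambda>h. h *\<^sub>R d)) (at 0)"
    and "\<And>t. G (\<gamma> t) = sin t *\<^sub>R a + cos t *\<^sub>R b"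
  shows "frechet_derivative G (at (\<gamma> 0)) d = a"
proof -
  let ?G' = "frechet_derivative G (at (\<gamma> 0))"
  have "((G \<circ> \<gamma>) has_derivative (?G' \<circ> (\<lambda>h. h *\<^sub>R d))) (at 0)"
    using assms(1,2) frechet_derivative_works diff_chain_at by blast
  moreover have "G \<circ> \<gamma> = (\<lambda>t. sin t *\<^sub>R a + cos t *\<^sub>R b)" using assms(3) by auto
  moreover have "((\<lambda>t. sin t *\<^sub>R a + cos t *\<^sub>R b) has_derivative (\<lambda>h. h *\<^sub>R a)) (at 0)"
    by (auto intro!: derivative_eq_intros)
  ultimately have "?G' \<circ> (\<lambda>h. h *\<^sub>R d) = (\<lambda>h. h *\<^sub>R a)"
    using has_derivative_unique by metis
  from fun_cong[OF this, of 1] show ?thesis by simp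
qed

lemma partials_via_plane_emb:
  fixes G :: "real^4 \<Rightarrow> 'b::real_normed_vector"
  assumes "G differentiable at (plane_emb p)" and "open D" and "p \<in> D"
    and "\<And>q. q \<in> D \<Longrightarrow> H q = G (plane_emb q)"
  shows "pd0 H p = pd4 G 1 (plane_emb p)" and "pd1 H p = pd4 G 2 (plane_emb p)"
proof -
  let ?G' = "frechet_derivative G (at (plane_emb p))"
  have "((G \<circ> plane_emb) has_derivative (?G' \<circ> plane_emb)) (at p)"
    using assms(1) frechet_derivative_works plane_emb_has_derivative diff_chain_at by blast
  then have "(H has_derivative (?G' \<circ> plane_emb)) (at p)"
    by (rule has_derivative_transform_within_open[OF _ assms(2,3)]) (simp add: assms(4))
  then have "frechet_derivative H (at p) = ?G' \<circ> plane_emb"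
    by (metis frechet_derivative_at)
  then show "pd0 H p = pd4 G 1 (plane_emb p)" and "pd1 H p = pd4 G 2 (plane_emb p)"
    by (simp_all add: pd0_def pd1_def pd4_def plane_emb_def)
qed

lemma has_derivative_zero_if_partials_zero:
  assumes "F differentiable at p" and "pd0 F p = 0" and "pd1 F p = 0"
  shows "(F has_derivative (\<lambda>h. 0)) (at p)"
proof -
  let ?F' = "frechet_derivative F (at p)"
  have lin: "linear ?F'" using linear_frechet_derivative[OF assms(1)] .
  have "?F' h = 0" for h
  proof -
    have "?F' h = ?F' (fst h *\<^sub>R (1, 0) + snd h *\<^sub>R (0, 1))" by (cases h) simp
    also have "\<dots> = fst h *\<^sub>R ?F' (1, 0) + snd h *\<^sub>R ?F' (0, 1)"
      by (simp only: linear_add[OF lin] linear_scale[OF lin])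
    finally show ?thesis using assms(2,3) by (simp add: pd0_def pd1_def)
  qed
  then have "?F' = (\<lambda>h. 0)" by (rule ext)
  with assms(1) show ?thesis by (metis frechet_derivative_works)
qed

lemma fueter_representation_on_slice:
  fixes v :: "real^4" and W :: "octo^4"
  assumes rep: "\<And>I J. (I, J) \<in> Nset \<Longrightarrow>
      f (v$1 *\<^sub>R oone + v$2 *\<^sub>R I + v$3 *\<^sub>R J + v$4 *\<^sub>R (I \<odot> J))
      = W$1 + I \<odot> W$2 + J \<odot> W$3 + (I \<odot> J) \<odot> W$4"
    and "v$3 = 0" and "v$4 = 0" and N: "(I, J) \<in> Nset"
  shows "f (v$1 *\<^sub>R oone + v$2 *\<^sub>R I) = W$1 + I \<odot> W$2"
proof -
  let ?a = "J \<odot> W$3 + (I \<odot> J) \<odot> W$4"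
  have "W$1 + I \<odot> W$2 + ?a = f (v$1 *\<^sub>R oone + v$2 *\<^sub>R I) + 0"
    using rep[OF N] assms(2,3) by (simp add: add.assoc)
  moreover have "W$1 + I \<odot> W$2 - ?a = f (v$1 *\<^sub>R oone + v$2 *\<^sub>R I) - 0"
    using rep[OF Nset_minus_right[OF N]] assms(2,3)
    by (simp add: omul_minus_left omul_minus_right algebra_simps)
  ultimately show ?thesis by (metis add_diff_eqs_imp_eq(1))
qed

lemma fueter_stem_on_plane:
  fixes v :: "real^4" and W :: "octo^4"
  assumes rep: "\<And>I J. (I, J) \<in> Nset \<Longrightarrow>
      f (v$1 *\<^sub>R oone + v$2 *\<^sub>R I + v$3 *\<^sub>R J + v$4 *\<^sub>R (I \<odot> J))
      = W$1 + I \<odot> W$2 + J \<odot> W$3 + (I \<odot> J) \<odot> W$4"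
    and v: "v = plane_emb p" and ind: "induces D F1 F2 f" and "p \<in> D"
  shows "W$1 = F1 p" and "W$2 = F2 p"
proof -
  have "F1 p + I \<odot> F2 p = W$1 + I \<odot> W$2" if N: "(I, unit_j) \<in> Nset" for I
  proof -
    have "I \<in> imag_units" using N by (simp add: Nset_def)
    then have "f (fst p *\<^sub>R oone + snd p *\<^sub>R I) = F1 p + I \<odot> F2 p"
      using ind \<open>p \<in> D\<close> unfolding induces_def by (metis prod.collapse)
    moreover have "f (fst p *\<^sub>R oone + snd p *\<^sub>R I) = W$1 + I \<odot> W$2"
      using fueter_representation_on_slice[OF rep _ _ N] by (simp add: v)
    ultimately show ?thesis by simp
  qed
  from this[OF unit_i_unit_j_Nset(1)] this[OF unit_i_unit_j_Nset(2)]
  have "F1 p + unit_i \<odot> F2 p = W$1 + unit_i \<odot> W$2"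
    and "F1 p - unit_i \<odot> F2 p = W$1 - unit_i \<odot> W$2"
    by (simp_all add: omul_minus_left)
  from add_diff_eqs_imp_eq[OF this] show "W$1 = F1 p" and "W$2 = F2 p"
    using omul_unit_i_cancel by metis+
qed

lemma fueter_stem_radial_derivative:
  fixes FF :: "real^4 \<Rightarrow> octo^4"
  assumes equiv: "\<And>A. A \<in> O3 \<Longrightarrow> FF (A *v plane_emb p) = mat_act A (FF (plane_emb p))"
    and diff: "(\<lambda>v. FF v $ k) differentiable at (plane_emb p)" and k: "k \<in> {3, 4}"
  shows "snd p *\<^sub>R pd4 (\<lambda>v. FF v $ k) k (plane_emb p) = FF (plane_emb p) $ 2"
proof -
  define \<gamma> where "\<gamma> t = plane_rot k t *v plane_emb p" for t
  have \<gamma>: "\<gamma> t = fst p *\<^sub>R axis 1 1 + (snd p * cos t) *\<^sub>R axis 2 1 + (snd p * sin t) *\<^sub>R axis k 1"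
    for t
    unfolding \<gamma>_def using plane_rot_plane_emb[OF k, of t "fst p" "snd p"] by simp
  have \<gamma>_0: "\<gamma> 0 = plane_emb p" by (simp add: \<gamma> plane_emb_def)
  have "(\<gamma> has_derivative (\<lambda>h. h *\<^sub>R (snd p *\<^sub>R axis k 1))) (at 0)"
    unfolding \<gamma> by (auto intro!: derivative_eq_intros)
  moreover have "FF (\<gamma> t) $ k = sin t *\<^sub>R FF (plane_emb p) $ 2 + cos t *\<^sub>R FF (plane_emb p) $ k" for t
    unfolding \<gamma>_def using equiv[OF plane_rot_O3[OF k]] mat_act_plane_rot_nth[OF k] by simp
  ultimately have "frechet_derivative (\<lambda>v. FF v $ k) (at (\<gamma> 0)) (snd p *\<^sub>R axis k 1)
      = FF (plane_emb p) $ 2"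
    by (intro frechet_derivative_sin_cos_curve[where b = "FF (plane_emb p) $ k"])
      (simp_all add: \<gamma>_0 diff)
  then show ?thesis
    unfolding pd4_def \<gamma>_0 by (simp add: linear_scale[OF linear_frechet_derivative[OF diff]])
qed

lemma slice_stem_imaginary_part_zero:
  assumes "open D" and sym: "\<And>x0 x1. (x0, x1) \<in> D \<Longrightarrow> (x0, - x1) \<in> D"
    and "slice_fueter_regular D f" and ind: "induces D F1 F2 f"
    and CR: "pd0 F1 p = pd1 F2 p" and "p \<in> D"
  shows "F2 p = 0"
proof -
  obtain FF :: "real^4 \<Rightarrow> octo^4" where C1: "C1_on (Eset D) FF"
    and equiv: "\<forall>A\<in>O3. \<forall>v\<in>Eset D. FF (A *v v) = mat_act A (FF v)"
    and rep: "\<forall>v\<in>Eset D. \<forall>(I, J)\<in>Nset.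
        f (v$1 *\<^sub>R oone + v$2 *\<^sub>R I + v$3 *\<^sub>R J + v$4 *\<^sub>R (I \<odot> J))
        = FF v $ 1 + I \<odot> (FF v $ 2) + J \<odot> (FF v $ 3) + (I \<odot> J) \<odot> (FF v $ 4)"
    and fueter: "\<forall>v\<in>Eset D. pd4 (\<lambda>v. FF v $ 1) 1 v - pd4 (\<lambda>v. FF v $ 2) 2 v
        - pd4 (\<lambda>v. FF v $ 3) 3 v - pd4 (\<lambda>v. FF v $ 4) 4 v = 0"
    using assms(3) unfolding slice_fueter_regular_def Let_def by blast
  let ?v = "plane_emb p"
  have in_E: "plane_emb q \<in> Eset D" if "q \<in> D" for q
    using plane_emb_in_Eset[OF sym that] .
  have rep_at: "f (v$1 *\<^sub>R oone + v$2 *\<^sub>R I + v$3 *\<^sub>R J + v$4 *\<^sub>R (I \<odot> J))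
      = FF v $ 1 + I \<odot> (FF v $ 2) + J \<odot> (FF v $ 3) + (I \<odot> J) \<odot> (FF v $ 4)"
    if "v \<in> Eset D" and "(I, J) \<in> Nset" for v I J
    using rep that by fast
  have on_plane: "FF (plane_emb q) $ 1 = F1 q" "FF (plane_emb q) $ 2 = F2 q" if "q \<in> D" for q
    using fueter_stem_on_plane[OF rep_at[OF in_E[OF that]] refl ind that] by simp_all
  have diff: "(\<lambda>v. FF v $ k) differentiable at ?v" for k
    using C1 in_E[OF \<open>p \<in> D\<close>] differentiable_vec_nth unfolding C1_on_def by blast
  let ?d = "\<lambda>k. pd4 (\<lambda>v. FF v $ k) k ?v"
  have "?d 1 = ?d 2"
    using partials_via_plane_emb[OF diff \<open>open D\<close> \<open>p \<in> D\<close>] on_plane CR by metis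
  with fueter in_E[OF \<open>p \<in> D\<close>] have sum_zero: "?d 3 + ?d 4 = 0"
    by (auto simp: algebra_simps)
  have radial: "snd p *\<^sub>R ?d k = F2 p" if "k \<in> {3, 4}" for k
  proof -
    have "\<And>A. A \<in> O3 \<Longrightarrow> FF (A *v ?v) = mat_act A (FF ?v)"
      using equiv in_E[OF \<open>p \<in> D\<close>] by blast
    from fueter_stem_radial_derivative[OF this diff that] show ?thesis
      using on_plane(2)[OF \<open>p \<in> D\<close>] by simp
  qed
  have "(2::real) *\<^sub>R F2 p = snd p *\<^sub>R (?d 3 + ?d 4)"
    using radial[of 3] radial[of 4] by (simp add: scaleR_2 scaleR_right_distrib)
  with sum_zero show ?thesis by simp
qed

lemma stem_has_derivative_zero:
  assumes "open D" and C1: "C1_on D (\<lambda>p. (F1 p, F2 p))"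
    and CR: "\<forall>p\<in>D. pd0 F1 p = pd1 F2 p \<and> pd1 F1 p = - pd0 F2 p"
    and F2_zero: "\<And>q. q \<in> D \<Longrightarrow> F2 q = 0" and "p \<in> D"
  shows "(F1 has_derivative (\<lambda>h. 0)) (at p)"
proof (rule has_derivative_zero_if_partials_zero)
  have "(F2 has_derivative (\<lambda>h. 0)) (at p)"
    by (rule has_derivative_transform_within_open[OF has_derivative_const \<open>open D\<close> \<open>p \<in> D\<close>])
      (simp add: F2_zero)
  then have "frechet_derivative F2 (at p) = (\<lambda>h. 0)" by (metis frechet_derivative_at)
  then show "pd0 F1 p = 0" "pd1 F1 p = 0"
    using CR \<open>p \<in> D\<close> unfolding pd0_def pd1_def by auto
  obtain \<Phi> where "((\<lambda>p. (F1 p, F2 p)) has_derivative \<Phi>) (at p)"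
    using C1 \<open>p \<in> D\<close> unfolding C1_on_def differentiable_def by blast
  from has_derivative_fst[OF this] show "F1 differentiable at p"
    unfolding differentiable_def by auto
qed

definition slice_coords :: "octo \<Rightarrow> real \<times> real" where
  "slice_coords x = (fst x $ 1, norm (x - (fst x $ 1) *\<^sub>R oone))"

lemma slice_coords_slice_point:
  "I \<in> imag_units \<Longrightarrow> slice_coords (x0 *\<^sub>R oone + x1 *\<^sub>R I) = (x0, \<bar>x1\<bar>)"
  by (auto simp: slice_coords_def imag_units_iff norm_eq_sqrt_inner)

lemma continuous_on_slice_coords: "continuous_on S slice_coords"
  unfolding slice_coords_def by (intro continuous_intros)

lemma slice_function_constant:
  assumes "open D" and sym: "\<And>x0 x1. (x0, x1) \<in> D \<Longrightarrow> (x0, - x1) \<in> D"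
    and "connected (OmegaD D)" and stem: "stem_function D F1 F2" and ind: "induces D F1 F2 f"
    and F2_zero: "\<And>p. p \<in> D \<Longrightarrow> F2 p = 0"
    and F1_deriv: "\<And>p. p \<in> D \<Longrightarrow> (F1 has_derivative (\<lambda>h. 0)) (at p)"
  shows "\<exists>c. \<forall>x\<in>OmegaD D. f x = c"
proof -
  have coords: "slice_coords x \<in> D \<and> f x = F1 (slice_coords x)" if x: "x \<in> OmegaD D" for x
  proof -
    obtain x0 x1 I where x_eq: "x = x0 *\<^sub>R oone + x1 *\<^sub>R I" and in_D: "(x0, x1) \<in> D"
      and I: "I \<in> imag_units"
      using x unfolding OmegaD_def by blast
    have "f x = F1 (x0, x1) + I \<odot> F2 (x0, x1)"
      using ind in_D I unfolding induces_def x_eq by blast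
    moreover have "(x0, \<bar>x1\<bar>) \<in> D \<and> F1 (x0, \<bar>x1\<bar>) = F1 (x0, x1)"
      using stem sym in_D unfolding stem_function_def by (cases "x1 \<ge> 0") auto
    ultimately show ?thesis
      using F2_zero[OF in_D] slice_coords_slice_point[OF I] by (simp add: x_eq)
  qed
  have "f x = f y" if "x \<in> OmegaD D" and "y \<in> OmegaD D" for x y
  proof -
    let ?C = "connected_component_set D (slice_coords x)"
    have "connected (slice_coords ` OmegaD D)"
      using connected_continuous_image[OF continuous_on_slice_coords \<open>connected (OmegaD D)\<close>] .
    then have "slice_coords y \<in> ?C"
      using coords that unfolding connected_component_def by blast
    moreover have "slice_coords x \<in> ?C" using coords[OF that(1)] by simp
    ultimately have "F1 (slice_coords x) = F1 (slice_coords y)"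
      using has_derivative_zero_unique_connected[of ?C F1] open_connected_component[OF \<open>open D\<close>]
        connected_component_subset F1_deriv by blast
    then show ?thesis using coords that by simp
  qed
  then show ?thesis by metis
qed

lemma constant_slice_regular:
  assumes "\<And>x. x \<in> OmegaD D \<Longrightarrow> f x = c"
  shows "slice_regular D f"
  unfolding slice_regular_def
proof (intro exI conjI)
  show "stem_function D (\<lambda>_. c) (\<lambda>_. 0)" by (simp add: stem_function_def)
  show "induces D (\<lambda>_. c) (\<lambda>_. 0) f"
    unfolding induces_def
  proof (intro allI impI)
    fix x0 x1 I assume "(x0, x1) \<in> D" and "I \<in> imag_units"
    then have "x0 *\<^sub>R oone + x1 *\<^sub>R I \<in> OmegaD D" unfolding OmegaD_def by blast
    then show "f (x0 *\<^sub>R oone + x1 *\<^sub>R I) = c + I \<odot> 0" using assms by simp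
  qed
  show "C1_on D (\<lambda>p. (c, 0::octo))" by (simp add: C1_on_def)
  show "\<forall>p\<in>D. pd0 (\<lambda>_. c) p = pd1 (\<lambda>_. 0::octo) p \<and> pd1 (\<lambda>_. c) p = - pd0 (\<lambda>_. 0::octo) p"
    by (simp add: pd0_def pd1_def)
qed

lemma constant_slice_fueter_regular:
  assumes "\<And>x. x \<in> OmegaD D \<Longrightarrow> f x = c"
  shows "slice_fueter_regular D f"
  unfolding slice_fueter_regular_def Let_def
proof (intro exI[of _ "\<lambda>v. vector [c, 0, 0, 0]"] conjI ballI)
  show "C1_on (Eset D) (\<lambda>v. vector [c, 0, 0, 0] :: octo^4)" by (simp add: C1_on_def)
  fix A v assume "A \<in> O3"
  then show "(vector [c, 0, 0, 0] :: octo^4) = mat_act A (vector [c, 0, 0, 0])"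
    using O3_first_column by (simp add: mat_act_def vec_eq_iff forall_4 sum_4)
next
  fix v IJ assume v: "v \<in> Eset D" and N: "IJ \<in> Nset"
  obtain I J where IJ: "IJ = (I, J)" by (cases IJ)
  show "case IJ of (I, J) \<Rightarrow>
      f (v$1 *\<^sub>R oone + v$2 *\<^sub>R I + v$3 *\<^sub>R J + v$4 *\<^sub>R (I \<odot> J)) =
      (vector [c, 0, 0, 0] :: octo^4) $ 1 + I \<odot> (vector [c, 0, 0, 0] :: octo^4) $ 2
      + J \<odot> (vector [c, 0, 0, 0] :: octo^4) $ 3 + (I \<odot> J) \<odot> (vector [c, 0, 0, 0] :: octo^4) $ 4"
    using Eset_point_in_OmegaD[OF v N[unfolded IJ]] assms by (simp add: IJ)
qed (simp_all add: pd4_def)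

theorem corollary2p4:
  fixes D :: "(real \<times> real) set" and f :: "octo \<Rightarrow> octo"
  assumes "open D" and "D \<noteq> {}"
    and "\<And>x0 x1. (x0, x1) \<in> D \<Longrightarrow> (x0, - x1) \<in> D"
    and "connected (OmegaD D)"
  shows "(slice_fueter_regular D f \<and> slice_regular D f) \<longleftrightarrow> (\<exists>c. \<forall>x\<in>OmegaD D. f x = c)"
proof
  assume regular: "slice_fueter_regular D f \<and> slice_regular D f"
  then obtain F1 F2 where stem: "stem_function D F1 F2" and ind: "induces D F1 F2 f"
    and C1: "C1_on D (\<lambda>p. (F1 p, F2 p))"
    and CR: "\<forall>p\<in>D. pd0 F1 p = pd1 F2 p \<and> pd1 F1 p = - pd0 F2 p"
    unfolding slice_regular_def by blast
  have F2_zero: "F2 p = 0" if "p \<in> D" for p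
    using slice_stem_imaginary_part_zero[OF assms(1,3) _ ind _ that] regular CR that by blast
  show "\<exists>c. \<forall>x\<in>OmegaD D. f x = c"
    using slice_function_constant[OF assms(1,3,4) stem ind F2_zero]
      stem_has_derivative_zero[OF assms(1) C1 CR F2_zero] by blast
next
  assume "\<exists>c. \<forall>x\<in>OmegaD D. f x = c"
  then show "slice_fueter_regular D f \<and> slice_regular D f"
    using constant_slice_fueter_regular constant_slice_regular by metis
qed

end
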